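(* Suppose $e>1$. For Serre weights $V_{\vec t,\vec s},V_{\vec{t'},\vec{s'}}$, consider the inflation–restriction exact sequence $$0\to H^1(\Gamma,V_{\vec t,\vec s}^\vee\otimes V_{\vec{t'},\vec{s'}})\xrightarrow{\mathrm{inf}}H^1(\mathcal K/\mathcal K_2,V_{\vec t,\vec s}^\vee\otimes V_{\vec{t'},\vec{s'}})\xrightarrow{\mathrm{res}}H^1(\mathcal K_1/\mathcal K_2,V_{\vec t,\vec s}^\vee\otimes V_{\vec{t'},\vec{s'}})^\Gamma.$$ Then the map $\mathrm{res}$ is a split surjection.
   Context: $p$ prime, $K/\mathbb Q_p$ finite with ring of integers $\mathcal O_K$, uniformizer $\pi$, residue field $k$, $f=[k:\mathbb F_p]$, ramification index $e$; $\overline{\mathbb F}$ an algebraic closure of $\mathbb F_p$; fix $\sigma_{f-1}:k\to\overline{\mathbb F}$, $\sigma_{f-1-i}=\sigma_{f-1}^{p^i}$. Serre weight: $V_{\vec t,\vec s}=\bigotimes_{i=0}^{f-1}(\det^{t_i}\otimes\mathrm{Sym}^{s_i}k^2)\otimes_{k,\sigma_i}\overline{\mathbb F}$ with $s_i\in[0,p-1]$. $\Gamma=\mathrm{GL}_2(k)\cong\mathcal K/\mathcal K_1$, $\mathcal K=\mathrm{GL}_2(\mathcal O_K)$, $\mathcal K_n=1+\pi^nM_2(\mathcal O_K)$; representations of $\Gamma$ are regarded as representations of $\mathcal K/\mathcal K_2$ by inflation; $V^\vee$ denotes the dual. *)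

theory Defs
  imports Complex_Main "HOL-Computational_Algebra.Polynomial"
begin

section \<open>2x2 matrices, written (a,b,c,d) for [[a,b],[c,d]]\<close>

type_synonym 'a mat2 = "'a \<times> 'a \<times> 'a \<times> 'a"

fun mmul :: "'a::comm_ring_1 mat2 \<Rightarrow> 'a mat2 \<Rightarrow> 'a mat2" where
  "mmul (a,b,c,d) (a',b',c',d') = (a*a'+b*c', a*b'+b*d', c*a'+d*c', c*b'+d*d')"

fun mdet :: "'a::comm_ring_1 mat2 \<Rightarrow> 'a" where
  "mdet (a,b,c,d) = a*d - b*c"

fun mmap :: "('a \<Rightarrow> 'b) \<Rightarrow> 'a mat2 \<Rightarrow> 'b mat2" where
  "mmap h (a,b,c,d) = (h a, h b, h c, h d)"

fun minv :: "'a::field mat2 \<Rightarrow> 'a mat2" where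
  "minv (a,b,c,d) = (let D = a*d - b*c in (d/D, -b/D, -c/D, a/D))"

definition ring_hom_fun :: "('a::comm_ring_1 \<Rightarrow> 'b::comm_ring_1) \<Rightarrow> bool" where
  "ring_hom_fun h \<longleftrightarrow> h 1 = 1 \<and> (\<forall>x y. h (x + y) = h x + h y) \<and> (\<forall>x y. h (x * y) = h x * h y)"

text \<open>\<open>O\<close> (the type 'o) is a complete discrete valuation ring of characteristic 0 with
  uniformizer \<open>unif\<close> and finite residue field 'k of characteristic p, the reduction map being
  \<open>red\<close>. Up to isomorphism these are exactly the rings of integers of finite extensions of Q_p.\<close>
definition padic_integer_ring :: "nat \<Rightarrow> 'o::idom \<Rightarrow> ('o \<Rightarrow> 'k::field) \<Rightarrow> bool" where
  "padic_integer_ring p unif red \<longleftrightarrow>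
     prime p \<and>
     (\<forall>n::nat. of_nat n = (0::'o) \<longrightarrow> n = 0) \<and>
     unif \<noteq> 0 \<and> \<not> unif dvd 1 \<and>
     (\<forall>x. x \<noteq> 0 \<longrightarrow> (\<exists>u n. u dvd 1 \<and> x = u * unif ^ n)) \<and>
     (\<forall>x::nat \<Rightarrow> 'o. (\<forall>n. unif ^ n dvd (x (Suc n) - x n)) \<longrightarrow>
         (\<exists>y. \<forall>n. unif ^ n dvd (y - x n))) \<and>
     ring_hom_fun red \<and> surj red \<and> (\<forall>x. red x = 0 \<longleftrightarrow> unif dvd x) \<and>
     finite (UNIV :: 'k set) \<and> of_nat p = (0::'k)"

definition ram_index :: "nat \<Rightarrow> 'o::idom \<Rightarrow> nat" where
  "ram_index p unif = (LEAST e. \<exists>u. u dvd 1 \<and> of_nat p = u * unif ^ e)"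

definition alg_closure_Fp :: "nat \<Rightarrow> 'f::field itself \<Rightarrow> bool" where
  "alg_closure_Fp p _ \<longleftrightarrow> of_nat p = (0::'f) \<and>
     (\<forall>q :: 'f poly. degree q > 0 \<longrightarrow> (\<exists>x. poly q x = 0)) \<and>
     (\<forall>x::'f. \<exists>n>0. x ^ (p ^ n) = x)"

definition Kgrp :: "'o::idom mat2 set" where
  "Kgrp = {g. mdet g dvd 1}"

definition Kn :: "'o::idom \<Rightarrow> nat \<Rightarrow> 'o mat2 set" where
  "Kn unif n = {(a,b,c,d). unif ^ n dvd (a - 1) \<and> unif ^ n dvd b \<and> unif ^ n dvd c \<and> unif ^ n dvd (d - 1)}"

definition sigma_i :: "nat \<Rightarrow> nat \<Rightarrow> ('k \<Rightarrow> 'f::field) \<Rightarrow> nat \<Rightarrow> 'k \<Rightarrow> 'f" where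
  "sigma_i p f \<sigma> i x = (\<sigma> x) ^ (p ^ (f - 1 - i))"

definition serre_params :: "nat \<Rightarrow> nat \<Rightarrow> (nat \<Rightarrow> nat) \<Rightarrow> bool" where
  "serre_params p f s \<longleftrightarrow> (\<forall>i<f. s i \<le> p - 1)"

text \<open>basis of the tensor product: multi-indices j with 0 <= j_i <= s_i\<close>
definition Jset :: "nat \<Rightarrow> (nat \<Rightarrow> nat) \<Rightarrow> (nat \<Rightarrow> nat) set" where
  "Jset f s = {j. (\<forall>i<f. j i \<le> s i) \<and> (\<forall>i\<ge>f. j i = 0)}"

text \<open>Sym^s of the standard representation, basis e1^j e2^(s-j); the matrix (a,b,c,d)
  sends e1 to a e1 + c e2 and e2 to b e1 + d e2. symcoef gives the coefficient of
  e1^m e2^(s-m) in g(e1^j e2^(s-j)) = (a e1 + c e2)^j (b e1 + d e2)^(s-j).\<close>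
definition symcoef :: "'f::field mat2 \<Rightarrow> nat \<Rightarrow> nat \<Rightarrow> nat \<Rightarrow> 'f" where
  "symcoef g s m j = (case g of (a,b,c,d) \<Rightarrow>
     (\<Sum>u\<le>j. \<Sum>v\<le>s - j. if u + v = m then
        of_nat (j choose u) * a ^ u * c ^ (j - u) * of_nat ((s - j) choose v) * b ^ v * d ^ (s - j - v)
      else 0))"

text \<open>matrix entry (m, j) of V_{t,s}(g) for g in GL_2(k), i.e. coefficient of e_m in g e_j,
  where V_{t,s} = tensor_i (det^{t_i} Sym^{s_i} k^2) tensor_{k,sigma_i} F\<close>
definition wmat :: "nat \<Rightarrow> nat \<Rightarrow> ('k::field \<Rightarrow> 'f::field) \<Rightarrow> (nat \<Rightarrow> int) \<Rightarrow> (nat \<Rightarrow> nat)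
    \<Rightarrow> 'k mat2 \<Rightarrow> (nat \<Rightarrow> nat) \<Rightarrow> (nat \<Rightarrow> nat) \<Rightarrow> 'f" where
  "wmat p f \<sigma> t s g m j =
     (\<Prod>i<f. (sigma_i p f \<sigma> i (mdet g)) powi (t i) *
              symcoef (mmap (sigma_i p f \<sigma> i) g) (s i) (m i) (j i))"

text \<open>The module M = V_{t,s}^dual tensor V_{t',s'}, elements are coordinate functions on
  Jset f s \<times> Jset f s' (w.r.t. dual basis tensor basis), zero outside.\<close>
definition Mspace :: "nat \<Rightarrow> (nat \<Rightarrow> nat) \<Rightarrow> (nat \<Rightarrow> nat) \<Rightarrow> ((nat \<Rightarrow> nat) \<times> (nat \<Rightarrow> nat) \<Rightarrow> 'f::field) set" where
  "Mspace f s s' = {m. \<forall>x. x \<notin> Jset f s \<times> Jset f s' \<longrightarrow> m x = 0}"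

text \<open>action of gamma in GL_2(k): the dual acts by the transpose of the inverse\<close>
definition Mact :: "nat \<Rightarrow> nat \<Rightarrow> ('k::field \<Rightarrow> 'f::field) \<Rightarrow> (nat \<Rightarrow> int) \<Rightarrow> (nat \<Rightarrow> nat)
    \<Rightarrow> (nat \<Rightarrow> int) \<Rightarrow> (nat \<Rightarrow> nat) \<Rightarrow> 'k mat2
    \<Rightarrow> ((nat \<Rightarrow> nat) \<times> (nat \<Rightarrow> nat) \<Rightarrow> 'f) \<Rightarrow> ((nat \<Rightarrow> nat) \<times> (nat \<Rightarrow> nat) \<Rightarrow> 'f)" where
  "Mact p f \<sigma> t s t' s' \<gamma> m = (\<lambda>(i, i').
     if i \<in> Jset f s \<and> i' \<in> Jset f s' then
       (\<Sum>j\<in>Jset f s. \<Sum>j'\<in>Jset f s'.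
          wmat p f \<sigma> t s (minv \<gamma>) j i * wmat p f \<sigma> t' s' \<gamma> i' j' * m (j, j'))
     else 0)"

text \<open>1-cocycles of K/K_2 with values in M (inflated along K \<rightarrow> GL_2(k)), viewed as
  crossed homomorphisms on K that vanish on K_2 (i.e. factor through K/K_2).\<close>
definition Z1_K_mod_K2 ::
  "nat \<Rightarrow> nat \<Rightarrow> 'o::idom \<Rightarrow> ('o \<Rightarrow> 'k::field) \<Rightarrow> ('k \<Rightarrow> 'f::field) \<Rightarrow> (nat \<Rightarrow> int) \<Rightarrow> (nat \<Rightarrow> nat)
    \<Rightarrow> (nat \<Rightarrow> int) \<Rightarrow> (nat \<Rightarrow> nat)
    \<Rightarrow> ('o mat2 \<Rightarrow> ((nat \<Rightarrow> nat) \<times> (nat \<Rightarrow> nat) \<Rightarrow> 'f)) set" where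
  "Z1_K_mod_K2 p f unif red \<sigma> t s t' s' =
     {d. (\<forall>g\<in>Kgrp. d g \<in> Mspace f s s') \<and>
         (\<forall>g\<in>Kgrp. \<forall>h\<in>Kgrp. d (mmul g h) =
             (\<lambda>x. d g x + Mact p f \<sigma> t s t' s' (mmap red g) (d h) x)) \<and>
         (\<forall>h\<in>Kn unif 2. d h = (\<lambda>_. 0))}"

text \<open>Since K_1 acts trivially on M, H^1(K_1/K_2, M) is the
  space of homomorphisms K_1/K_2 \<rightarrow> M (no nonzero coboundaries); Gamma-invariance of c
  means c(g n g^-1) = g.c(n). Functions are normalised to be 0 outside K_1.\<close>
definition H1_K1_mod_K2_inv ::
  "nat \<Rightarrow> nat \<Rightarrow> 'o::idom \<Rightarrow> ('o \<Rightarrow> 'k::field) \<Rightarrow> ('k \<Rightarrow> 'f::field) \<Rightarrow> (nat \<Rightarrow> int) \<Rightarrow> (nat \<Rightarrow> nat)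
    \<Rightarrow> (nat \<Rightarrow> int) \<Rightarrow> (nat \<Rightarrow> nat)
    \<Rightarrow> ('o mat2 \<Rightarrow> ((nat \<Rightarrow> nat) \<times> (nat \<Rightarrow> nat) \<Rightarrow> 'f)) set" where
  "H1_K1_mod_K2_inv p f unif red \<sigma> t s t' s' =
     {c. (\<forall>n. n \<notin> Kn unif 1 \<longrightarrow> c n = (\<lambda>_. 0)) \<and>
         (\<forall>n\<in>Kn unif 1. c n \<in> Mspace f s s') \<and>
         (\<forall>n\<in>Kn unif 1. \<forall>h\<in>Kn unif 1. c (mmul n h) = (\<lambda>x. c n x + c h x)) \<and>
         (\<forall>h\<in>Kn unif 2. c h = (\<lambda>_. 0)) \<and>
         (\<forall>g\<in>Kgrp. \<forall>n\<in>Kn unif 1. \<forall>n'\<in>Kn unif 1. mmul g n = mmul n' g \<longrightarrow>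
             c n' = Mact p f \<sigma> t s t' s' (mmap red g) (c n))}"

end

theory Submission
  imports Defs
begin

text \<open>
  Since e > 1, the uniformizer squared divides p. Hence for x in k the element
  \<open>\<omega>(x) = (any lift of x^(1/p))^p\<close> is well defined modulo \<open>\<pi>\<^sup>2\<close>, and
  \<open>\<omega>\<close> is additive and multiplicative modulo \<open>\<pi>\<^sup>2\<close>. Applying \<open>\<omega>\<close> entrywise gives a group
  homomorphism \<open>\<Gamma> \<rightarrow> \<K>/\<K>\<^sub>2\<close> splitting reduction, so \<open>\<K>/\<K>\<^sub>2 = \<K>\<^sub>1/\<K>\<^sub>2 \<rtimes> \<Gamma>\<close>.
  A \<open>\<Gamma>\<close>-invariant homomorphism c on \<open>\<K>\<^sub>1/\<K>\<^sub>2\<close> then extends to the cocycle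
  \<open>g \<mapsto> c(g \<omega>(g)\<^sup>-\<^sup>1)\<close>, and this extension is linear in c.
\<close>

definition mat_one :: "'a::comm_ring_1 mat2" where
  "mat_one = (1, 0, 0, 1)"

definition mat_cong :: "'a::comm_ring_1 \<Rightarrow> 'a mat2 \<Rightarrow> 'a mat2 \<Rightarrow> bool" where
  "mat_cong m A B \<longleftrightarrow> (case A of (a, b, c, d) \<Rightarrow> case B of (a', b', c', d') \<Rightarrow>
     m dvd (a - a') \<and> m dvd (b - b') \<and> m dvd (c - c') \<and> m dvd (d - d'))"

text \<open>Junk unless the determinant is a unit.\<close>
definition mat_inv :: "'a::comm_ring_1 mat2 \<Rightarrow> 'a mat2" where
  "mat_inv A = (case A of (a, b, c, d) \<Rightarrow>
     let v = (SOME v. mdet A * v = 1) in (v * d, - (v * b), - (v * c), v * a))"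

lemma mat_cong_simp:
  "mat_cong m (a, b, c, d) (a', b', c', d') \<longleftrightarrow>
     m dvd (a - a') \<and> m dvd (b - b') \<and> m dvd (c - c') \<and> m dvd (d - d')"
  by (simp add: mat_cong_def)

lemma dvd_diff_commute: "(m::'a::comm_ring_1) dvd (x - y) \<Longrightarrow> m dvd (y - x)"
  by (metis dvd_minus_iff minus_diff_eq)

lemma dvd_diff_trans: "(m::'a::comm_ring_1) dvd (x - y) \<Longrightarrow> m dvd (y - z) \<Longrightarrow> m dvd (x - z)"
  using dvd_add[of m "x - y" "y - z"] by simp

lemma dvd_diff_lincomb:
  "(m::'a::comm_ring_1) dvd (x - x') \<Longrightarrow> m dvd (y - y') \<Longrightarrow> m dvd (u * x + v * y - (u * x' + v * y'))"
  using dvd_add[OF dvd_mult[of m "x - x'" u] dvd_mult[of m "y - y'" v]]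
  by (simp add: algebra_simps)

lemma dvd_diff_lincomb':
  "(m::'a::comm_ring_1) dvd (x - x') \<Longrightarrow> m dvd (y - y') \<Longrightarrow> m dvd (x * u + y * v - (x' * u + y' * v))"
  using dvd_diff_lincomb[of m x x' y y' u v] by (simp add: mult.commute)

lemma mat_cong_refl: "mat_cong m A A"
  by (cases A rule: prod_cases4) (simp add: mat_cong_simp)

lemma mat_cong_sym: "mat_cong m A B \<Longrightarrow> mat_cong m B A"
  by (cases A rule: prod_cases4; cases B rule: prod_cases4) (simp add: mat_cong_simp dvd_diff_commute)

lemma mat_cong_trans: "mat_cong m A B \<Longrightarrow> mat_cong m B C \<Longrightarrow> mat_cong m A C"
  by (cases A rule: prod_cases4; cases B rule: prod_cases4; cases C rule: prod_cases4)
     (auto simp add: mat_cong_simp intro: dvd_diff_trans)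

lemma mat_cong_mmul_left: "mat_cong m A A' \<Longrightarrow> mat_cong m (mmul B A) (mmul B A')"
  by (cases A rule: prod_cases4; cases A' rule: prod_cases4; cases B rule: prod_cases4)
     (simp add: mat_cong_simp dvd_diff_lincomb)

lemma mat_cong_mmul_right: "mat_cong m A A' \<Longrightarrow> mat_cong m (mmul A B) (mmul A' B)"
  by (cases A rule: prod_cases4; cases A' rule: prod_cases4; cases B rule: prod_cases4)
     (simp add: mat_cong_simp dvd_diff_lincomb')

lemma mmul_assoc: "mmul (mmul A B) C = mmul A (mmul B (C::'a::comm_ring_1 mat2))"
  by (cases A rule: prod_cases4; cases B rule: prod_cases4; cases C rule: prod_cases4)
     (simp add: algebra_simps)

lemma mmul_one_left [simp]: "mmul mat_one A = (A::'a::comm_ring_1 mat2)"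
  by (cases A rule: prod_cases4) (simp add: mat_one_def)

lemma mmul_one_right [simp]: "mmul A mat_one = (A::'a::comm_ring_1 mat2)"
  by (cases A rule: prod_cases4) (simp add: mat_one_def)

lemma mdet_mmul: "mdet (mmul A B) = mdet A * mdet (B::'a::comm_ring_1 mat2)"
  by (cases A rule: prod_cases4; cases B rule: prod_cases4) (simp add: algebra_simps)

lemma mdet_one [simp]: "mdet mat_one = 1"
  by (simp add: mat_one_def)

lemma mdet_mmul_unit: "mdet A dvd 1 \<Longrightarrow> mdet B dvd 1 \<Longrightarrow> mdet (mmul A B) dvd 1"
  using mult_dvd_mono[of "mdet A" 1 "mdet B" 1] by (simp add: mdet_mmul)

lemma mmul_scaled_adjugate:
  fixes a b c d v :: "'a::comm_ring_1"
  shows "mmul (a, b, c, d) (v * d, - (v * b), - (v * c), v * a) =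
           ((a * d - b * c) * v, 0, 0, (a * d - b * c) * v)"
    and "mmul (v * d, - (v * b), - (v * c), v * a) (a, b, c, d) =
           ((a * d - b * c) * v, 0, 0, (a * d - b * c) * v)"
  by (simp_all add: algebra_simps)

lemma mmul_mat_inv:
  assumes "mdet A dvd 1"
  shows "mmul A (mat_inv A) = mat_one" and "mmul (mat_inv A) A = mat_one"
proof -
  obtain a b c d where A: "A = (a, b, c, d)" by (cases A rule: prod_cases4)
  define v where "v = (SOME v. mdet A * v = 1)"
  obtain w where w: "1 = mdet A * w"
    using assms by (rule dvdE)
  have "mdet A * v = 1"
    unfolding v_def by (rule someI[of _ w]) (rule w[symmetric])
  then have v: "(a * d - b * c) * v = 1" by (simp add: A)
  have "mat_inv A = (v * d, - (v * b), - (v * c), v * a)"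
    by (simp add: mat_inv_def A v_def Let_def)
  then show "mmul A (mat_inv A) = mat_one" and "mmul (mat_inv A) A = mat_one"
    by (simp_all only: A mmul_scaled_adjugate v mat_one_def)
qed

lemma mat_inv_unique:
  assumes "mdet A dvd 1" "mmul A X = mat_one"
  shows "mat_inv A = X"
proof -
  have "mat_inv A = mmul (mmul (mat_inv A) A) X"
    by (simp add: assms(2) mmul_assoc)
  also have "\<dots> = X"
    by (simp add: assms(1) mmul_mat_inv(2))
  finally show ?thesis .
qed

lemma mat_inv_one [simp]: "mat_inv mat_one = (mat_one :: 'a::comm_ring_1 mat2)"
  by (rule mat_inv_unique) simp_all

lemma mmul_mat_inv_cancel_left: "mdet A dvd 1 \<Longrightarrow> mmul (mat_inv A) (mmul A X) = X"
  by (simp add: mmul_mat_inv(2) flip: mmul_assoc)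

lemma mmul_mat_inv_cancel_right: "mdet A dvd 1 \<Longrightarrow> mmul (mmul X (mat_inv A)) A = X"
  by (simp add: mmul_mat_inv(2) mmul_assoc)

lemma mat_inv_mmul:
  assumes "mdet A dvd 1" "mdet B dvd 1"
  shows "mat_inv (mmul A B) = mmul (mat_inv B) (mat_inv A)"
proof (rule mat_inv_unique)
  have "mmul (mmul A B) (mmul (mat_inv B) (mat_inv A)) = mmul A (mmul (mmul B (mat_inv B)) (mat_inv A))"
    by (simp add: mmul_assoc)
  then show "mmul (mmul A B) (mmul (mat_inv B) (mat_inv A)) = mat_one"
    by (simp add: assms mmul_mat_inv(1))
qed (simp add: assms mdet_mmul_unit)

lemma mat_cong_mat_inv:
  assumes "mdet A dvd 1" "mdet B dvd 1" "mat_cong m A B"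
  shows "mat_cong m (mat_inv A) (mat_inv B)"
proof -
  have "mat_cong m (mmul (mat_inv A) (mmul B (mat_inv B))) (mmul (mat_inv A) (mmul A (mat_inv B)))"
    by (intro mat_cong_mmul_left mat_cong_mmul_right mat_cong_sym[OF assms(3)])
  then show ?thesis
    by (simp add: assms mmul_mat_inv flip: mmul_assoc)
qed

lemma binomial_prime_power_add:
  fixes a b :: "'a::comm_semiring_1"
  assumes "prime p"
  shows "\<exists>Q. (a + b) ^ p = a ^ p + b ^ p + of_nat p * Q"
proof -
  have p0: "p > 0" using assms prime_gt_0_nat by blast
  define Q where "Q = (\<Sum>k\<in>{0<..<p}. of_nat ((p choose k) div p) * a ^ k * b ^ (p - k) :: 'a)"
  have "(a + b) ^ p = (\<Sum>k\<le>p. of_nat (p choose k) * a ^ k * b ^ (p - k))"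
    by (simp add: binomial_ring add.commute)
  also have "{..p} = insert p (insert 0 {0<..<p})" using p0 by auto
  also have "(\<Sum>k\<in>insert p (insert 0 {0<..<p}). of_nat (p choose k) * a ^ k * b ^ (p - k))
      = a ^ p + b ^ p + (\<Sum>k\<in>{0<..<p}. of_nat (p choose k) * a ^ k * b ^ (p - k))"
    using p0 by (simp add: add.assoc)
  also have "(\<Sum>k\<in>{0<..<p}. of_nat (p choose k) * a ^ k * b ^ (p - k)) = of_nat p * Q"
    unfolding Q_def sum_distrib_left
  proof (rule sum.cong [OF refl])
    fix k assume "k \<in> {0<..<p}"
    then have "p choose k = p * ((p choose k) div p)"
      using dvd_choose_prime assms by auto
    then show "of_nat (p choose k) * a ^ k * b ^ (p - k) =
        of_nat p * (of_nat ((p choose k) div p) * a ^ k * b ^ (p - k))"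
      by (metis mult.assoc of_nat_mult)
  qed
  finally show ?thesis by blast
qed

lemma mem_Kn_iff_mat_cong: "A \<in> Kn unif n \<longleftrightarrow> mat_cong (unif ^ n) A mat_one"
  by (cases A rule: prod_cases4) (simp add: Kn_def mat_one_def mat_cong_simp)

lemma mem_Kn_le: "A \<in> Kn unif n \<Longrightarrow> m \<le> n \<Longrightarrow> A \<in> Kn unif m"
  by (auto simp: Kn_def intro: dvd_trans[OF le_imp_power_dvd])

section \<open>Reduction modulo a uniformizer whose square divides p\<close>

locale ramified_reduction =
  fixes p :: nat and unif :: "'o::idom" and red :: "'o \<Rightarrow> 'k::field"
  assumes prime_p: "prime p"
    and red_hom: "ring_hom_fun red"
    and surj_red: "surj red"
    and red_eq_0_iff: "red x = 0 \<longleftrightarrow> unif dvd x"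
    and unit_if_red_ne_0: "red x \<noteq> 0 \<Longrightarrow> x dvd 1"
    and finite_residue_field: "finite (UNIV :: 'k set)"
    and residue_char: "of_nat p = (0 :: 'k)"
    and unif_sq_dvd_p: "unif ^ 2 dvd of_nat p"

lemma padic_integer_ring_ramified_reduction:
  fixes unif :: "'o::idom" and red :: "'o \<Rightarrow> 'k::field"
  assumes P: "padic_integer_ring p unif red" and e: "ram_index p unif > 1"
  shows "ramified_reduction p unif red"
proof -
  have prime: "prime p"
    and char_0: "\<forall>n::nat. of_nat n = (0 :: 'o) \<longrightarrow> n = 0"
    and factor: "\<forall>x. x \<noteq> 0 \<longrightarrow> (\<exists>u n. u dvd 1 \<and> x = u * unif ^ n)"
    and kernel: "\<forall>x. red x = 0 \<longleftrightarrow> unif dvd x"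
    and residue: "ring_hom_fun red" "surj red" "finite (UNIV :: 'k set)" "of_nat p = (0 :: 'k)"
    using P unfolding padic_integer_ring_def by auto
  have "(of_nat p :: 'o) \<noteq> 0"
    using char_0 prime_gt_0_nat[OF prime] by auto
  then have "\<exists>n u. u dvd 1 \<and> (of_nat p :: 'o) = u * unif ^ n"
    using factor[rule_format] by blast
  then have "\<exists>u. u dvd 1 \<and> (of_nat p :: 'o) = u * unif ^ ram_index p unif"
    unfolding ram_index_def by (rule LeastI_ex)
  then obtain u where u: "(of_nat p :: 'o) = u * unif ^ ram_index p unif"
    by blast
  have "unif ^ 2 dvd unif ^ ram_index p unif"
    using e by (intro le_imp_power_dvd) simp
  then have sq: "unif ^ 2 dvd (of_nat p :: 'o)"
    unfolding u by (rule dvd_mult)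
  have unit: "x dvd 1" if "red x \<noteq> 0" for x
  proof -
    have x: "\<not> unif dvd x" using kernel that by blast
    then obtain u n where u: "u dvd 1" "x = u * unif ^ n"
      using factor[rule_format, of x] by (metis dvd_0_right)
    show ?thesis
    proof (cases n)
      case 0
      then show ?thesis using u by simp
    next
      case (Suc m)
      then have "unif dvd x" unfolding u(2) by simp
      then show ?thesis using x by contradiction
    qed
  qed
  show ?thesis
    by unfold_locales (use prime kernel residue sq unit in simp_all)
qed

context ramified_reduction
begin

lemma red_add [simp]: "red (x + y) = red x + red y"
  and red_mult [simp]: "red (x * y) = red x * red y"
  and red_one [simp]: "red 1 = 1"
  using red_hom unfolding ring_hom_fun_def by blast+

lemma red_zero [simp]: "red 0 = 0"
  using red_add[of 0 0] by (metis add_cancel_right_right)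

lemma red_uminus [simp]: "red (- x) = - red x"
  using red_add[of x "- x"] by (simp add: eq_neg_iff_add_eq_0 add.commute)

lemma red_diff [simp]: "red (x - y) = red x - red y"
  using red_add[of x "- y"] by simp

lemma red_power [simp]: "red (x ^ n) = red x ^ n"
  by (induction n) simp_all

lemma red_ne_0_if_unit: "x dvd 1 \<Longrightarrow> red x \<noteq> 0"
  by (metis dvdE mult_zero_left one_neq_zero red_mult red_one)

lemma two_le_p: "2 \<le> p"
  using prime_p prime_ge_2_nat by blast

lemma unif_sq_dvd_power_p_diff:
  assumes "red y = red y'"
  shows "unif ^ 2 dvd (y' ^ p - y ^ p)"
proof -
  have "unif dvd (y' - y)"
    using assms red_eq_0_iff[of "y' - y"] by simp
  then obtain w where "y' - y = unif * w"
    by (rule dvdE)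
  then have w: "y' = y + unif * w"
    by (simp add: algebra_simps)
  obtain Q where Q: "(y + unif * w) ^ p = y ^ p + (unif * w) ^ p + of_nat p * Q"
    using binomial_prime_power_add[OF prime_p] by blast
  have "unif ^ 2 dvd (unif * w) ^ p"
    using le_imp_power_dvd[OF two_le_p, of unif] by (simp add: power_mult_distrib)
  then have "unif ^ 2 dvd (unif * w) ^ p + of_nat p * Q"
    using unif_sq_dvd_p by simp
  then show ?thesis using Q w by simp
qed

lemma frobenius_add: "(a + b) ^ p = a ^ p + (b :: 'k) ^ p"
  using binomial_prime_power_add[OF prime_p, of a b] residue_char by auto

lemma bij_frobenius: "bij (\<lambda>x :: 'k. x ^ p)"
proof -
  have "inj (\<lambda>x :: 'k. x ^ p)"
  proof (rule injI)
    fix a b :: 'k assume "a ^ p = b ^ p"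
    then have "(a - b) ^ p = 0" using frobenius_add[of "a - b" b] by simp
    then show "a = b" by simp
  qed
  then show ?thesis
    using finite_UNIV_inj_surj[OF finite_residue_field] by (auto simp: bij_def)
qed

definition frobenius_root :: "'k \<Rightarrow> 'k" where
  "frobenius_root = inv (\<lambda>x. x ^ p)"

lemma frobenius_root_eqI: "y ^ p = x \<Longrightarrow> frobenius_root x = y"
  unfolding frobenius_root_def using bij_frobenius by (metis bij_def inv_f_f)

lemma frobenius_root_power [simp]: "frobenius_root x ^ p = x"
  unfolding frobenius_root_def using bij_frobenius by (metis bij_def surj_f_inv_f)

definition lift :: "'k \<Rightarrow> 'o" where
  "lift x = (SOME y. red y = x)"

lemma red_lift [simp]: "red (lift x) = x"
  unfolding lift_def using surj_red by (metis (mono_tags) someI surj_def)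

text \<open>
  The map \<open>\<omega>\<close>; by \<open>unif_sq_dvd_power_p_diff\<close> any other lift of the p-th root gives the same
  value modulo \<open>\<pi>\<^sup>2\<close>, which makes \<open>\<omega>\<close> a ring homomorphism modulo \<open>\<pi>\<^sup>2\<close>.
\<close>
definition teich :: "'k \<Rightarrow> 'o" where
  "teich x = lift (frobenius_root x) ^ p"

lemma red_teich [simp]: "red (teich x) = x"
  by (simp add: teich_def)

lemma teich_cong_power: "frobenius_root x = red y \<Longrightarrow> unif ^ 2 dvd (y ^ p - teich x)"
  unfolding teich_def by (rule unif_sq_dvd_power_p_diff) simp

lemma teich_add: "unif ^ 2 dvd (teich (a + b) - (teich a + teich b))"
proof -
  define y y' where "y = lift (frobenius_root a)" and "y' = lift (frobenius_root b)"
  obtain Q where Q: "(y + y') ^ p = y ^ p + y' ^ p + of_nat p * Q"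
    using binomial_prime_power_add[OF prime_p] by blast
  have "frobenius_root (a + b) = red (y + y')"
    by (rule frobenius_root_eqI) (simp add: y_def y'_def frobenius_add)
  then have "unif ^ 2 dvd (teich (a + b) - (y + y') ^ p)"
    using dvd_diff_commute teich_cong_power by blast
  moreover have "unif ^ 2 dvd ((y + y') ^ p - (teich a + teich b))"
    using Q unif_sq_dvd_p by (simp add: teich_def y_def y'_def)
  ultimately show ?thesis by (rule dvd_diff_trans)
qed

lemma teich_mult: "unif ^ 2 dvd (teich (a * b) - teich a * teich b)"
proof -
  have "frobenius_root (a * b) = red (lift (frobenius_root a) * lift (frobenius_root b))"
    by (rule frobenius_root_eqI) (simp add: power_mult_distrib)
  then show ?thesis
    using teich_cong_power dvd_diff_commute by (fastforce simp: teich_def power_mult_distrib)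
qed

lemma teich_one: "unif ^ 2 dvd (teich 1 - 1)"
  using teich_cong_power[of 1 1] frobenius_root_eqI[of 1 1] dvd_diff_commute by auto

lemma teich_zero: "unif ^ 2 dvd teich 0"
  using teich_cong_power[of 0 0] frobenius_root_eqI[of 0 0] two_le_p by (simp add: power_0_left)

lemma teich_bilinear: "unif ^ 2 dvd (teich (x * y + z * w) - (teich x * teich y + teich z * teich w))"
proof -
  have "unif ^ 2 dvd (teich (x * y) - teich x * teich y) + (teich (z * w) - teich z * teich w)"
    using teich_mult by (rule dvd_add) (rule teich_mult)
  then have "unif ^ 2 dvd ((teich (x * y) + teich (z * w)) - (teich x * teich y + teich z * teich w))"
    by (simp add: algebra_simps)
  with teich_add show ?thesis by (rule dvd_diff_trans)
qed

lemma mmap_red_mmul: "mmap red (mmul A B) = mmul (mmap red A) (mmap red B)"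
  by (cases A rule: prod_cases4; cases B rule: prod_cases4) simp

lemma mdet_mmap_red: "mdet (mmap red A) = red (mdet A)"
  by (cases A rule: prod_cases4) simp

lemma mem_Kn_1_iff: "A \<in> Kn unif 1 \<longleftrightarrow> mmap red A = mat_one"
  by (cases A rule: prod_cases4) (simp add: Kn_def mat_one_def flip: red_eq_0_iff)

lemma mdet_unit_if_mem_Kn_1: "A \<in> Kn unif 1 \<Longrightarrow> mdet A dvd 1"
  using mdet_mmap_red[of A] unit_if_red_ne_0[of "mdet A"] unfolding mem_Kn_1_iff by simp

lemma mmap_red_one [simp]: "mmap red mat_one = mat_one"
  by (simp add: mat_one_def)

lemma mmap_red_mmul_mat_inv: "mdet A dvd 1 \<Longrightarrow> mmul (mmap red A) (mmap red (mat_inv A)) = mat_one"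
  using arg_cong[OF mmul_mat_inv(1), of A "mmap red"] by (simp add: mmap_red_mmul)

section \<open>The splitting of reduction modulo the second congruence subgroup\<close>

definition teich_mat :: "'o mat2 \<Rightarrow> 'o mat2" where
  "teich_mat g = mmap teich (mmap red g)"

lemma mmap_red_teich_mat [simp]: "mmap red (teich_mat g) = mmap red g"
  by (cases g rule: prod_cases4) (simp add: teich_mat_def)

lemma mdet_teich_mat_unit:
  assumes "mdet g dvd 1"
  shows "mdet (teich_mat g) dvd 1"
proof (rule unit_if_red_ne_0)
  have "red (mdet (teich_mat g)) = red (mdet g)"
    by (metis mdet_mmap_red mmap_red_teich_mat)
  then show "red (mdet (teich_mat g)) \<noteq> 0"
    using red_ne_0_if_unit[OF assms] by simp
qed

lemma teich_mat_mmul_cong: "mat_cong (unif ^ 2) (teich_mat (mmul g h)) (mmul (teich_mat g) (teich_mat h))"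
  by (cases g rule: prod_cases4; cases h rule: prod_cases4) (simp add: teich_mat_def mat_cong_simp teich_bilinear)

lemma teich_mat_cong_one: "mmap red g = mat_one \<Longrightarrow> mat_cong (unif ^ 2) (teich_mat g) mat_one"
  by (cases g rule: prod_cases4) (simp add: teich_mat_def mat_one_def mat_cong_simp teich_one teich_zero)

lemma mmul_mem_Kn_1: "A \<in> Kn unif 1 \<Longrightarrow> B \<in> Kn unif 1 \<Longrightarrow> mmul A B \<in> Kn unif 1"
  unfolding mem_Kn_1_iff by (simp add: mmap_red_mmul)

lemma conjugate_mem_Kn_1:
  assumes "n \<in> Kn unif 1" "mdet A dvd 1"
  shows "mmul A (mmul n (mat_inv A)) \<in> Kn unif 1"
  using assms mmap_red_mmul_mat_inv[OF assms(2)] unfolding mem_Kn_1_iff by (simp add: mmap_red_mmul)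

lemma hom_eq_if_cong:
  fixes c :: "'o mat2 \<Rightarrow> 'x \<Rightarrow> 'y::monoid_add"
  assumes hom: "\<forall>n\<in>Kn unif 1. \<forall>h\<in>Kn unif 1. c (mmul n h) = (\<lambda>x. c n x + c h x)"
    and vanish: "\<forall>h\<in>Kn unif 2. c h = (\<lambda>_. 0)"
    and n: "n \<in> Kn unif 1" and n': "n' \<in> Kn unif 1" and cong: "mat_cong (unif ^ 2) n n'"
  shows "c n' = c n"
proof -
  have det: "mdet n dvd 1" using mdet_unit_if_mem_Kn_1[OF n] .
  define h where "h = mmul (mat_inv n) n'"
  have "mat_cong (unif ^ 2) h (mmul (mat_inv n) n)"
    unfolding h_def by (intro mat_cong_mmul_left mat_cong_sym[OF cong])
  then have "h \<in> Kn unif 2"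
    by (simp add: mem_Kn_iff_mat_cong mmul_mat_inv(2)[OF det])
  moreover have "n' = mmul n h"
    by (simp add: h_def mmul_mat_inv(1)[OF det] flip: mmul_assoc)
  moreover have "h \<in> Kn unif 1"
    using \<open>h \<in> Kn unif 2\<close> by (rule mem_Kn_le) simp
  ultimately show ?thesis
    using hom vanish n by simp
qed

definition k1_part :: "'o mat2 \<Rightarrow> 'o mat2" where
  "k1_part g = mmul g (mat_inv (teich_mat g))"

lemma k1_part_mem_Kn_1:
  assumes "mdet g dvd 1"
  shows "k1_part g \<in> Kn unif 1"
proof -
  have "mmap red (k1_part g) = mmul (mmap red (teich_mat g)) (mmap red (mat_inv (teich_mat g)))"
    by (simp add: k1_part_def mmap_red_mmul)
  also have "\<dots> = mat_one"
    by (rule mmap_red_mmul_mat_inv[OF mdet_teich_mat_unit[OF assms]])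
  finally show ?thesis
    unfolding mem_Kn_1_iff .
qed

lemma k1_part_cong:
  assumes "n \<in> Kn unif 1"
  shows "mat_cong (unif ^ 2) (k1_part n) n"
proof -
  have det: "mdet n dvd 1" using mdet_unit_if_mem_Kn_1[OF assms] .
  have red: "mmap red n = mat_one"
    using assms unfolding mem_Kn_1_iff .
  have "mat_cong (unif ^ 2) (mat_inv (teich_mat n)) (mat_inv mat_one)"
    by (intro mat_cong_mat_inv mdet_teich_mat_unit[OF det] teich_mat_cong_one[OF red]) simp
  then show ?thesis
    unfolding k1_part_def using mat_cong_mmul_left[of _ _ _ n] by fastforce
qed

lemma k1_part_mmul_cong:
  assumes g: "mdet g dvd 1" and h: "mdet h dvd 1"
  shows "mat_cong (unif ^ 2) (k1_part (mmul g h))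
     (mmul (k1_part g) (mmul (teich_mat g) (mmul (k1_part h) (mat_inv (teich_mat g)))))"
proof -
  have Tg: "mdet (teich_mat g) dvd 1" and Th: "mdet (teich_mat h) dvd 1"
    using g h by (simp_all add: mdet_teich_mat_unit)
  have "mat_cong (unif ^ 2) (mat_inv (teich_mat (mmul g h))) (mat_inv (mmul (teich_mat g) (teich_mat h)))"
    by (intro mat_cong_mat_inv teich_mat_mmul_cong mdet_teich_mat_unit mdet_mmul_unit g h Tg Th)
  then have "mat_cong (unif ^ 2) (k1_part (mmul g h))
      (mmul (mmul g h) (mat_inv (mmul (teich_mat g) (teich_mat h))))"
    unfolding k1_part_def by (rule mat_cong_mmul_left)
  also have "mmul (mmul g h) (mat_inv (mmul (teich_mat g) (teich_mat h))) =
      mmul (k1_part g) (mmul (teich_mat g) (mmul (k1_part h) (mat_inv (teich_mat g))))"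
    by (simp add: k1_part_def mat_inv_mmul Tg Th mmul_assoc mmul_mat_inv_cancel_left)
  finally show ?thesis .
qed

section \<open>Extending invariant homomorphisms to cocycles\<close>

lemma k1_part_restriction:
  assumes c: "c \<in> H1_K1_mod_K2_inv p f unif red \<sigma> t s t' s'" and n: "n \<in> Kn unif 1"
  shows "c (k1_part n) = c n"
  using c hom_eq_if_cong[OF _ _ n k1_part_mem_Kn_1[OF mdet_unit_if_mem_Kn_1[OF n]] mat_cong_sym[OF k1_part_cong[OF n]]]
  unfolding H1_K1_mod_K2_inv_def by blast

lemma k1_part_extension_cocycle:
  assumes c: "c \<in> H1_K1_mod_K2_inv p f unif red \<sigma> t s t' s'"
  shows "(\<lambda>g. c (k1_part g)) \<in> Z1_K_mod_K2 p f unif red \<sigma> t s t' s'"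
proof -
  have space: "\<forall>n\<in>Kn unif 1. c n \<in> Mspace f s s'"
    and hom: "\<forall>n\<in>Kn unif 1. \<forall>h\<in>Kn unif 1. c (mmul n h) = (\<lambda>x. c n x + c h x)"
    and vanish: "\<forall>h\<in>Kn unif 2. c h = (\<lambda>_. 0)"
    and invariant: "\<forall>g\<in>Kgrp. \<forall>n\<in>Kn unif 1. \<forall>n'\<in>Kn unif 1. mmul g n = mmul n' g \<longrightarrow>
             c n' = Mact p f \<sigma> t s t' s' (mmap red g) (c n)"
    using c unfolding H1_K1_mod_K2_inv_def by blast+
  have K1: "k1_part g \<in> Kn unif 1" if "g \<in> Kgrp" for g
    using that k1_part_mem_Kn_1 by (simp add: Kgrp_def)
  have one: "mat_one \<in> Kn unif 1" "mat_one \<in> Kn unif 2"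
    by (simp_all add: mem_Kn_iff_mat_cong mat_cong_refl del: One_nat_def)
  show ?thesis
    unfolding Z1_K_mod_K2_def mem_Collect_eq
  proof (intro conjI ballI)
    fix g :: "'o mat2" assume "g \<in> Kgrp"
    then show "c (k1_part g) \<in> Mspace f s s'"
      using space K1 by blast
  next
    fix h :: "'o mat2" assume h2: "h \<in> Kn unif 2"
    then have h1: "h \<in> Kn unif 1" by (rule mem_Kn_le) simp
    have "mat_cong (unif ^ 2) mat_one (k1_part h)"
      using mat_cong_trans[OF k1_part_cong[OF h1] h2[unfolded mem_Kn_iff_mat_cong]] by (rule mat_cong_sym)
    then have "c (k1_part h) = c mat_one"
      using hom_eq_if_cong[OF hom vanish one(1) k1_part_mem_Kn_1[OF mdet_unit_if_mem_Kn_1[OF h1]]] by blast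
    then show "c (k1_part h) = (\<lambda>_. 0)"
      using vanish one(2) by simp
  next
    fix g h :: "'o mat2" assume g: "g \<in> Kgrp" and h: "h \<in> Kgrp"
    then have dg: "mdet g dvd 1" and dh: "mdet h dvd 1" and dT: "mdet (teich_mat g) dvd 1"
      by (simp_all add: Kgrp_def mdet_teich_mat_unit)
    define m where "m = mmul (teich_mat g) (mmul (k1_part h) (mat_inv (teich_mat g)))"
    have m: "m \<in> Kn unif 1"
      unfolding m_def using K1[OF h] dT by (rule conjugate_mem_Kn_1)
    have "c (k1_part (mmul g h)) = c (mmul (k1_part g) m)"
      using hom_eq_if_cong[OF hom vanish mmul_mem_Kn_1[OF K1[OF g] m]
          k1_part_mem_Kn_1[OF mdet_mmul_unit[OF dg dh]]] k1_part_mmul_cong[OF dg dh]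
      by (simp add: m_def mat_cong_sym)
    also have "\<dots> = (\<lambda>x. c (k1_part g) x + c m x)"
      using hom K1[OF g] m by blast
    also have "c m = Mact p f \<sigma> t s t' s' (mmap red g) (c (k1_part h))"
    proof -
      have "teich_mat g \<in> Kgrp"
        using dT by (simp add: Kgrp_def)
      moreover have "mmul (teich_mat g) (k1_part h) = mmul m (teich_mat g)"
        by (simp add: m_def mmul_mat_inv_cancel_right dT flip: mmul_assoc)
      ultimately show ?thesis
        using invariant K1[OF h] m by simp
    qed
    finally show "c (k1_part (mmul g h)) =
        (\<lambda>x. c (k1_part g) x + Mact p f \<sigma> t s t' s' (mmap red g) (c (k1_part h)) x)" .
  qed
qed

end

theorem proposition2p8:
  fixes p f :: nat and unif :: "'o::idom" and red :: "'o \<Rightarrow> 'k::field"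
    and \<sigma> :: "'k \<Rightarrow> 'f::field"
    and t t' :: "nat \<Rightarrow> int" and s s' :: "nat \<Rightarrow> nat"
  assumes "padic_integer_ring p unif red"
    and "card (UNIV :: 'k set) = p ^ f"
    and "ram_index p unif > 1"
    and "alg_closure_Fp p TYPE('f)"
    and "ring_hom_fun \<sigma>"
    and "serre_params p f s" and "serre_params p f s'"
  shows "\<exists>S. (\<forall>c\<in>H1_K1_mod_K2_inv p f unif red \<sigma> t s t' s'.
               S c \<in> Z1_K_mod_K2 p f unif red \<sigma> t s t' s' \<and> (\<forall>n\<in>Kn unif 1. S c n = c n)) \<and>
             (\<forall>c\<in>H1_K1_mod_K2_inv p f unif red \<sigma> t s t' s'.
              \<forall>c'\<in>H1_K1_mod_K2_inv p f unif red \<sigma> t s t' s'. \<forall>a b :: 'f.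
               S (\<lambda>g x. a * c g x + b * c' g x) = (\<lambda>g x. a * S c g x + b * S c' g x))"
proof -
  interpret ramified_reduction p unif red
    using assms(1,3) by (rule padic_integer_ring_ramified_reduction)
  show ?thesis
    by (intro exI[of _ "\<lambda>c g. c (k1_part g)"])
       (simp add: k1_part_extension_cocycle k1_part_restriction)
qed

end
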